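(* Let $X$ be a finite simplicial complex whose vertices carry a labelling by $\{1,\dots,n\}$, and suppose a second labelling is given; let $\sigma:\{1,\dots,n\}\to\{1,\dots,n\}$ be the permutation such that the vertex with label $i$ in the first labelling has label $\sigma(i)$ in the second. Let $B_d$ and $\tilde B_d$ be the matrices of the boundary maps induced by the first and second labelling, respectively. Then for all maps $F:C_d(X)\to C_d(X)$ and $H:C_{d-1}(X)\to C_{d-1}(X)$ that are componentwise with odd components, $$T_\sigma^{d-1}\circ B_dFB_d^\intercal=\tilde B_dF\tilde B_d^\intercal\circ T_\sigma^{d-1},\qquad T_\sigma^{d}\circ B_d^\intercal HB_d=\tilde B_d^\intercal H\tilde B_d\circ T_\sigma^{d}.$$ In particular, a different choice of labelling gives conjugate vector fields.
   Context: A finite simplicial complex $X$ on a vertex set is a collection of nonempty subsets of the vertex set closed under taking nonempty subsets; $X_d$ is the set of its simplices with $d+1$ vertices. $C_d(X)$ is the real vector space with basis $X_d$ (ordered in a fixed way, independent of labelling) and inner product making $X_d$ orthonormal. Given a labelling of the vertices by $\{1,\dots,n\}$, a $d$-simplex whose vertices have labels $i_0<\dots<i_d$ is written $[i_0,\dots,i_d]$, and the boundary map is $\partial_d[i_0,\dots,i_d]=\sum_{k=0}^d(-1)^k[i_0,\dots,\widehat{i_k},\dots,i_d]$ (label $i_k$ omitted); its matrix in the bases $X_d,X_{d-1}$ is the boundary matrix of that labelling. For a set $A=\{i_0<\dots<i_d\}\subseteq\{1,\dots,n\}$ and a permutation $\sigma$, $\operatorname{sgn}(A,\sigma)=\operatorname{sgn}(\tau)$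 where $\tau$ is the unique permutation of $\{0,\dots,d\}$ with $\sigma(i_{\tau(0)})<\dots<\sigma(i_{\tau(d)})$. $T_\sigma^d:C_d(X)\to C_d(X)$ is the diagonal linear map with $(T^d_\sigma x)_s=\operatorname{sgn}(A_s,\sigma)x_s$, where $A_s$ is the set of labels of $s$ in the first labelling. A map $F:C_d(X)\to C_d(X)$ is componentwise with odd components if $(F(x))_s=F_s(x_s)$ for each $s\in X_d$ with each $F_s:\mathbb{R}\to\mathbb{R}$ odd. *)

theory Defs
  imports Complex_Main "HOL-Combinatorics.Permutations"
begin

text \<open>Vertices are identified with their labels in the first labelling, so a
simplicial complex is a finite family of nonempty subsets of {1..n} closed
under nonempty subsets.\<close>

definition simplicial_complex :: "nat \<Rightarrow> nat set set \<Rightarrow> bool" where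
  "simplicial_complex n X \<longleftrightarrow> finite X \<and> (\<forall>s\<in>X. s \<noteq> {} \<and> s \<subseteq> {1..n}) \<and>
     (\<forall>s\<in>X. \<forall>t. t \<noteq> {} \<and> t \<subseteq> s \<longrightarrow> t \<in> X)"

definition faces :: "nat set set \<Rightarrow> nat \<Rightarrow> nat set set" where
  "faces X d = {s \<in> X. card s = d + 1}"

text \<open>Entry (t,s) of the boundary matrix for the labelling in which vertex v
(first label v) carries label f v: the coefficient of t in the boundary of s,
namely (-1)^k where k is the position (from 0) of the label of the omitted
vertex among the sorted labels of s.  f = id gives B_d, f = sigma gives the
matrix of the second labelling.\<close>
definition bdry_coef :: "(nat \<Rightarrow> nat) \<Rightarrow> nat set \<Rightarrow> nat set \<Rightarrow> real" where
  "bdry_coef f t s = (if t \<subseteq> s \<and> card (s - t) = 1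
      then (-1) ^ card {w \<in> s. f w < f (the_elem (s - t))} else 0)"

definition sgnA :: "nat set \<Rightarrow> (nat \<Rightarrow> nat) \<Rightarrow> real" where
  "sgnA A \<sigma> = (let xs = sorted_list_of_set A in
     of_int (sign (THE \<tau>. \<tau> permutes {0..<card A} \<and>
       (\<forall>j k. j < k \<and> k < card A \<longrightarrow> \<sigma> (xs ! (\<tau> j)) < \<sigma> (xs ! (\<tau> k))))))"

text \<open>Chains are functions on simplices (only values on X_d matter).\<close>
definition Tmap :: "(nat \<Rightarrow> nat) \<Rightarrow> (nat set \<Rightarrow> real) \<Rightarrow> nat set \<Rightarrow> real" where
  "Tmap \<sigma> x = (\<lambda>s. sgnA s \<sigma> * x s)"

text \<open>B_d F B_d^T for F componentwise with components Fc s, on C_{d-1}.\<close>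
definition op_down :: "nat set set \<Rightarrow> nat \<Rightarrow> (nat \<Rightarrow> nat) \<Rightarrow> (nat set \<Rightarrow> real \<Rightarrow> real)
    \<Rightarrow> (nat set \<Rightarrow> real) \<Rightarrow> nat set \<Rightarrow> real" where
  "op_down X d f Fc y = (\<lambda>t. \<Sum>s\<in>faces X d. bdry_coef f t s *
      Fc s (\<Sum>t'\<in>faces X (d - 1). bdry_coef f t' s * y t'))"

text \<open>B_d^T H B_d for H componentwise with components Hc t, on C_d.\<close>
definition op_up :: "nat set set \<Rightarrow> nat \<Rightarrow> (nat \<Rightarrow> nat) \<Rightarrow> (nat set \<Rightarrow> real \<Rightarrow> real)
    \<Rightarrow> (nat set \<Rightarrow> real) \<Rightarrow> nat set \<Rightarrow> real" where
  "op_up X d f Hc x = (\<lambda>s. \<Sum>t\<in>faces X (d - 1). bdry_coef f t s *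
      Hc t (\<Sum>s'\<in>faces X d. bdry_coef f t s' * x s'))"

end

theory Submission
  imports Defs
begin

(* If v sits at position
   a = #{w \<in> s. w < v} in the first order and b = #{w \<in> s. \<sigma> w < \<sigma> v} in the
   second, the sorting permutation of s is that of s - {v} composed with the cycles
   (a ... k) and (b ... k)^-1 on positions 0..k, k = card s - 1, so
   sgnA s \<sigma> * sgnA (s - {v}) \<sigma> = (-1)^(a+b).
   The boundary coefficient of s at s - {v} is (-1)^a in the first labelling and (-1)^b
   in the second, hence the second boundary matrix is T^(d-1) B_d T^d.  The T's are
   diagonal with entries +-1, and such matrices commute with componentwise odd maps,
   which gives both identities. *)

definition shift_cycle :: "nat \<Rightarrow> nat \<Rightarrow> nat \<Rightarrow> nat" where
  "shift_cycle k a i = (if i < a then i else if i < k then Suc i else if i = k then a else i)"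

lemma shift_cycle_self [simp]: "shift_cycle k k = id"
  by (auto simp: shift_cycle_def fun_eq_iff)

lemma shift_cycle_Suc:
  assumes "a < k" shows "shift_cycle k a = transpose a (Suc a) \<circ> shift_cycle k (Suc a)"
  using assms by (auto simp: shift_cycle_def fun_eq_iff transpose_def)

lemma shift_cycle_permutes:
  assumes "a \<le> k" shows "shift_cycle k a permutes {0..<Suc k}"
  using assms
proof (induction a rule: inc_induct)
  case base
  show ?case
    unfolding shift_cycle_self by (rule permutes_id)
next
  case (step n)
  then show ?case
    unfolding shift_cycle_Suc[OF \<open>n < k\<close>] by (intro permutes_compose permutes_swap_id) auto
qed

lemma sign_shift_cycle:
  assumes "a \<le> k" shows "sign (shift_cycle k a) = (-1) ^ (k - a)"
  using assms
proof (induction a rule: inc_induct)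
  case base
  show ?case by simp
next
  case (step n)
  have "permutation (shift_cycle k (Suc n))"
    using \<open>n < k\<close> by (intro permutes_imp_permutation[OF _ shift_cycle_permutes]) simp_all
  then have "sign (shift_cycle k n) = - sign (shift_cycle k (Suc n))"
    unfolding shift_cycle_Suc[OF \<open>n < k\<close>] by (simp add: sign_compose permutation_swap_id sign_swap_id)
  moreover have "k - n = Suc (k - Suc n)"
    using \<open>n < k\<close> by simp
  ultimately show ?case
    using step.IH by simp
qed

lemma shift_cycle_image: "a \<le> k \<Longrightarrow> shift_cycle k a ` {0..<k} = {0..<Suc k} - {a}"
proof (intro equalityI subsetI)
  fix p assume "a \<le> k" "p \<in> {0..<Suc k} - {a}"
  then have "p = shift_cycle k a (if p < a then p else p - 1)" "(if p < a then p else p - 1) < k"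
    by (auto simp: shift_cycle_def)
  then show "p \<in> shift_cycle k a ` {0..<k}" by auto
qed (auto simp: shift_cycle_def)

definition sorting_perm :: "(nat \<Rightarrow> 'a::linorder) \<Rightarrow> nat \<Rightarrow> (nat \<Rightarrow> nat) \<Rightarrow> bool" where
  "sorting_perm h m \<tau> \<longleftrightarrow> \<tau> permutes {0..<m} \<and> (\<forall>i j. i < j \<and> j < m \<longrightarrow> h (\<tau> i) < h (\<tau> j))"

lemma sorting_perm_cong:
  assumes "\<And>i. i < m \<Longrightarrow> h i = h' i"
  shows "sorting_perm h m \<tau> \<longleftrightarrow> sorting_perm h' m \<tau>"
proof (cases "\<tau> permutes {0..<m}")
  case True
  then have "h (\<tau> i) = h' (\<tau> i)" if "i < m" for i
    using assms permutes_in_image[OF True] that by simp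
  then show ?thesis
    unfolding sorting_perm_def by simp
qed (simp add: sorting_perm_def)

lemma sorting_perm_unique:
  assumes inj: "inj_on h {0..<m}" and \<tau>1: "sorting_perm h m \<tau>1" and \<tau>2: "sorting_perm h m \<tau>2"
  shows "\<tau>1 = \<tau>2"
proof
  have p1: "\<tau>1 permutes {0..<m}" and p2: "\<tau>2 permutes {0..<m}"
    using \<tau>1 \<tau>2 by (auto simp: sorting_perm_def)
  have "sorted_wrt (<) (map (h \<circ> \<tau>) [0..<m]) \<and> set (map (h \<circ> \<tau>) [0..<m]) = h ` {0..<m}"
    if "sorting_perm h m \<tau>" for \<tau>
  proof
    show "sorted_wrt (<) (map (h \<circ> \<tau>) [0..<m])"
      using that unfolding sorting_perm_def sorted_wrt_iff_nth_less by simp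
    have "set (map (h \<circ> \<tau>) [0..<m]) = h ` \<tau> ` {0..<m}"
      by (simp add: image_comp)
    then show "set (map (h \<circ> \<tau>) [0..<m]) = h ` {0..<m}"
      using that by (simp add: sorting_perm_def permutes_image)
  qed
  then have "map (h \<circ> \<tau>1) [0..<m] = map (h \<circ> \<tau>2) [0..<m]"
    using \<tau>1 \<tau>2 unfolding strict_sorted_iff by (intro sorted_distinct_set_unique) auto
  then have "h (\<tau>1 i) = h (\<tau>2 i)" if "i < m" for i
    using that by (simp add: map_eq_conv)
  moreover have "\<tau>1 i \<in> {0..<m}" "\<tau>2 i \<in> {0..<m}" if "i < m" for i
    using that permutes_in_image[OF p1] permutes_in_image[OF p2] by auto
  ultimately have "\<tau>1 i = \<tau>2 i" if "i < m" for i
    using inj_onD[OF inj] that by (metis atLeastLessThan_iff zero_le)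
  then show "\<tau>1 i = \<tau>2 i" for i
    using p1 p2 by (cases "i < m") (auto simp: permutes_not_in)
qed

lemma less_threshold_iff_less_card:
  fixes g :: "nat \<Rightarrow> 'a::linorder"
  assumes mono: "\<And>i j. i < j \<Longrightarrow> j < k \<Longrightarrow> g i < g j" and "i < k"
  shows "g i < c \<longleftrightarrow> i < card {j. j < k \<and> g j < c}" (is "_ \<longleftrightarrow> i < card ?S")
proof
  assume "g i < c"
  then have "{..i} \<subseteq> ?S"
    using mono \<open>i < k\<close> by (force simp: le_less)
  then show "i < card ?S"
    using card_mono[of ?S "{..i}"] by simp
next
  assume "i < card ?S"
  show "g i < c"
  proof (rule ccontr)
    assume "\<not> g i < c"
    then have "?S \<subseteq> {..<i}"
      using mono by (auto simp: not_less) (metis leD linorder_neqE_nat order.strict_trans)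
    then show False
      using \<open>i < card ?S\<close> card_mono[of "{..<i}" ?S] by simp
  qed
qed

(* G \<circ> inv (shift_cycle k b) is g with the value c inserted at position b. *)
lemma shift_cycle_less_imp_less:
  fixes g :: "nat \<Rightarrow> 'a::linorder"
  assumes mono: "\<And>i j. i < j \<Longrightarrow> j < k \<Longrightarrow> g i < g j"
    and below: "\<And>i. i < k \<Longrightarrow> g i < c \<longleftrightarrow> i < b"
    and ne: "\<And>i. i < k \<Longrightarrow> g i \<noteq> c"
    and "b \<le> k" "i < Suc k" "i' < Suc k"
    and less: "shift_cycle k b i < shift_cycle k b i'"
  defines "G \<equiv> \<lambda>i. if i < k then g i else c"
  shows "G i < G i'"
proof (cases "i < k")
  case True
  show ?thesis
  proof (cases "i' < k")
    case True
    with \<open>i < k\<close> less have "i < i'"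
      by (auto simp: shift_cycle_def split: if_splits)
    then show ?thesis
      using mono \<open>i < k\<close> \<open>i' < k\<close> by (simp add: G_def)
  next
    case False
    then have "i' = k"
      using \<open>i' < Suc k\<close> by simp
    with \<open>i < k\<close> \<open>b \<le> k\<close> less have "i < b"
      by (auto simp: shift_cycle_def split: if_splits)
    then show ?thesis
      using below \<open>i < k\<close> \<open>i' = k\<close> by (simp add: G_def)
  qed
next
  case False
  then have "i = k"
    using \<open>i < Suc k\<close> by simp
  then have "i' < k"
    using \<open>i' < Suc k\<close> less by (metis less_SucE order.irrefl)
  with \<open>i = k\<close> \<open>b \<le> k\<close> less have "b \<le> i'"
    by (auto simp: shift_cycle_def split: if_splits)
  then have "c < g i'"
    using below[OF \<open>i' < k\<close>] ne[OF \<open>i' < k\<close>] by auto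
  then show ?thesis
    using \<open>i = k\<close> \<open>i' < k\<close> by (simp add: G_def)
qed

lemma sorting_perm_shift_cycle_rank:
  fixes h :: "nat \<Rightarrow> 'a::linorder"
  assumes inj: "inj_on h {0..<Suc k}" and "a \<le> k"
    and \<tau>': "sorting_perm (h \<circ> shift_cycle k a) k \<tau>'" and "i < k"
  shows "h (shift_cycle k a (\<tau>' i)) < h a \<longleftrightarrow> i < card {j. j < Suc k \<and> h j < h a}"
    and "h (shift_cycle k a (\<tau>' i)) \<noteq> h a"
proof -
  let ?p = "shift_cycle k a \<circ> \<tau>'"
  have \<tau>'_perm: "\<tau>' permutes {0..<k}"
    and mono: "\<And>i j. i < j \<Longrightarrow> j < k \<Longrightarrow> h (?p i) < h (?p j)"
    using \<tau>' by (auto simp: sorting_perm_def)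
  have img: "?p ` {0..<k} = {0..<Suc k} - {a}"
    by (metis image_comp permutes_image[OF \<tau>'_perm] shift_cycle_image[OF \<open>a \<le> k\<close>])
  have "inj ?p"
    using \<open>a \<le> k\<close> by (intro inj_compose permutes_inj[OF \<tau>'_perm] permutes_inj[OF shift_cycle_permutes])
  then have inj_p: "inj_on ?p {j. j < k \<and> h (?p j) < h a}"
    by (rule inj_on_subset) simp
  have "card {j. j < Suc k \<and> h j < h a} = card {i \<in> ?p ` {0..<k}. h i < h a}"
    unfolding img by (rule arg_cong[where f = card]) auto
  also have "{i \<in> ?p ` {0..<k}. h i < h a} = ?p ` {j. j < k \<and> h (?p j) < h a}"
    by auto
  also have "card \<dots> = card {j. j < k \<and> h (?p j) < h a}"
    using inj_p by (rule card_image)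
  finally have "card {j. j < Suc k \<and> h j < h a} = card {j. j < k \<and> h (?p j) < h a}" .
  then show "h (shift_cycle k a (\<tau>' i)) < h a \<longleftrightarrow> i < card {j. j < Suc k \<and> h j < h a}"
    using less_threshold_iff_less_card[where g = "\<lambda>j. h (?p j)" and c = "h a", OF mono \<open>i < k\<close>] by simp
  have "?p i \<in> {0..<Suc k} - {a}"
    using img \<open>i < k\<close> by (metis atLeastLessThan_iff image_eqI zero_le)
  then show "h (shift_cycle k a (\<tau>' i)) \<noteq> h a"
    using inj_on_contraD[OF inj, of "?p i" a] \<open>a \<le> k\<close> by simp
qed

lemma sorting_perm_insert:
  fixes h :: "nat \<Rightarrow> 'a::linorder"
  assumes inj: "inj_on h {0..<Suc k}" and "a \<le> k"
    and \<tau>': "sorting_perm (h \<circ> shift_cycle k a) k \<tau>'"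
  defines "b \<equiv> card {i. i < Suc k \<and> h i < h a}"
  shows "sorting_perm h (Suc k) (shift_cycle k a \<circ> \<tau>' \<circ> inv (shift_cycle k b))"
proof -
  let ?ca = "shift_cycle k a" and ?cb = "shift_cycle k b"
  define g where "g = h \<circ> ?ca \<circ> \<tau>'"
  have \<tau>'_perm: "\<tau>' permutes {0..<k}"
    and g_mono: "\<And>i j. i < j \<Longrightarrow> j < k \<Longrightarrow> g i < g j"
    using \<tau>' by (auto simp: sorting_perm_def g_def)
  note rank = sorting_perm_shift_cycle_rank[OF inj \<open>a \<le> k\<close> \<tau>', folded b_def]
  have g_below: "g i < h a \<longleftrightarrow> i < b" and g_ne: "g i \<noteq> h a" if "i < k" for i
    using rank[OF that] by (simp_all add: g_def)
  have "b \<le> card ({0..<Suc k} - {a})"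
    unfolding b_def by (intro card_mono) auto
  then have "b \<le> k"
    using \<open>a \<le> k\<close> by simp
  then have cb: "?cb permutes {0..<Suc k}"
    by (rule shift_cycle_permutes)
  define \<tau> where "\<tau> = ?ca \<circ> \<tau>' \<circ> inv ?cb"
  have "\<tau> permutes {0..<Suc k}"
    unfolding \<tau>_def using \<open>a \<le> k\<close> permutes_subset[OF \<tau>'_perm]
    by (intro permutes_compose permutes_inv cb shift_cycle_permutes) auto
  moreover have "h (\<tau> j) < h (\<tau> l)" if "j < l" "l < Suc k" for j l
  proof -
    have h_\<tau>: "h (\<tau> (?cb i)) = (if i < k then g i else h a)" if "i < Suc k" for i
    proof -
      have "\<tau> (?cb i) = ?ca (\<tau>' i)"
        unfolding \<tau>_def using permutes_inverses(2)[OF cb] by simp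
      then show ?thesis
        using that \<tau>'_perm \<open>a \<le> k\<close> by (auto simp: g_def permutes_not_in shift_cycle_def)
    qed
    have "j \<in> ?cb ` {0..<Suc k}" "l \<in> ?cb ` {0..<Suc k}"
      unfolding permutes_image[OF cb] using that by simp_all
    then obtain i i' where "i < Suc k" "j = ?cb i" "i' < Suc k" "l = ?cb i'"
      by auto
    then show ?thesis
      using shift_cycle_less_imp_less[where g = g and c = "h a" and b = b and k = k,
          OF g_mono g_below g_ne \<open>b \<le> k\<close>, of i i'] h_\<tau> \<open>j < l\<close>
      by simp
  qed
  ultimately show ?thesis
    unfolding sorting_perm_def \<tau>_def by blast
qed

lemma sorting_perm_exists: "inj_on h {0..<m} \<Longrightarrow> \<exists>\<tau>. sorting_perm h m \<tau>"
proof (induction m)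
  case 0
  have "sorting_perm h 0 id"
    by (simp add: sorting_perm_def permutes_id)
  then show ?case by blast
next
  case (Suc k)
  have "inj_on h {0..<k}"
    using Suc.prems by (rule inj_on_subset) auto
  then obtain \<tau>' where "sorting_perm h k \<tau>'"
    using Suc.IH by blast
  then have "sorting_perm (h \<circ> shift_cycle k k) k \<tau>'"
    by simp
  then show ?case
    using sorting_perm_insert[OF Suc.prems order.refl] by blast
qed

lemma nth_sorted_list_of_set_Diff_singleton:
  assumes "finite s" "v \<in> s"
  defines "a \<equiv> card {w \<in> s. w < v}"
  shows "a < card s" "sorted_list_of_set s ! a = v"
    and "\<And>i. i < card s - 1 \<Longrightarrow>
      sorted_list_of_set (s - {v}) ! i = sorted_list_of_set s ! shift_cycle (card s - 1) a i"
proof -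
  define xs where "xs = sorted_list_of_set s"
  have xs: "sorted_wrt (<) xs" "distinct xs" "set xs = s" "length xs = card s"
    using assms(1) by (simp_all add: xs_def)
  obtain p where p: "p < length xs" "xs ! p = v"
    using assms(2) xs(3) by (metis in_set_conv_nth)
  have split: "xs = take p xs @ v # drop (Suc p) xs"
    using p by (metis id_take_nth_drop)
  have "{w \<in> s. w < v} = set (take p xs)"
  proof -
    have "sorted_wrt (<) (take p xs @ v # drop (Suc p) xs)"
      using xs(1) split by simp
    then have "\<forall>w\<in>set (take p xs). w < v" "\<forall>w\<in>set (drop (Suc p) xs). v < w"
      by (simp_all add: sorted_wrt_append)
    moreover have "s = set (take p xs) \<union> {v} \<union> set (drop (Suc p) xs)"
      using arg_cong[OF split, of set] xs(3) by auto
    ultimately show ?thesis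
      by fastforce
  qed
  then have "a = p"
    unfolding a_def using xs(2) p(1) by (simp add: distinct_card)
  then show "a < card s" "sorted_list_of_set s ! a = v"
    using p xs(4) by (simp_all add: xs_def)
  have "distinct (take p xs @ v # drop (Suc p) xs)"
    using xs(2) split by simp
  then have "v \<notin> set (take p xs)"
    by auto
  then have "sorted_list_of_set (s - {v}) = take p xs @ drop (Suc p) xs"
    using assms(1) split by (metis remove1.simps(2) remove1_append sorted_list_of_set_remove xs_def)
  then show "sorted_list_of_set (s - {v}) ! i = sorted_list_of_set s ! shift_cycle (card s - 1) a i"
    if "i < card s - 1" for i
    using that \<open>a = p\<close> p xs(4) by (auto simp: nth_append shift_cycle_def min_def xs_def)
qed

abbreviation sorted_labels :: "(nat \<Rightarrow> nat) \<Rightarrow> nat set \<Rightarrow> nat \<Rightarrow> nat" where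
  "sorted_labels \<sigma> s \<equiv> \<lambda>i. \<sigma> (sorted_list_of_set s ! i)"

lemma inj_on_sorted_labels:
  assumes "inj \<sigma>" "finite s"
  shows "inj_on (sorted_labels \<sigma> s) {0..<card s}"
proof (rule inj_onI)
  fix i j
  assume "i \<in> {0..<card s}" "j \<in> {0..<card s}"
    and "\<sigma> (sorted_list_of_set s ! i) = \<sigma> (sorted_list_of_set s ! j)"
  then show "i = j"
    using assms by (simp add: inj_eq nth_eq_iff_index_eq)
qed

lemma sgnA_eq_sign:
  assumes "inj \<sigma>" "finite s" "sorting_perm (sorted_labels \<sigma> s) (card s) \<tau>"
  shows "sgnA s \<sigma> = of_int (sign \<tau>)"
proof -
  have "sgnA s \<sigma> = of_int (sign (THE \<tau>. sorting_perm (sorted_labels \<sigma> s) (card s) \<tau>))"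
    unfolding sgnA_def sorting_perm_def Let_def ..
  also have "(THE \<tau>. sorting_perm (sorted_labels \<sigma> s) (card s) \<tau>) = \<tau>"
    using assms sorting_perm_unique[OF inj_on_sorted_labels] by blast
  finally show ?thesis .
qed

lemma sgnA_cases: "sgnA s \<sigma> = 1 \<or> sgnA s \<sigma> = -1"
  unfolding sgnA_def Let_def sign_def by simp

lemma minus_one_power_diff_mult:
  assumes "a \<le> k" "b \<le> k"
  shows "(-1::'a::ring_1) ^ (k - a) * (-1) ^ (k - b) = (-1) ^ (a + b)"
proof -
  have "even (k - a + (k - b)) \<longleftrightarrow> even (a + b)"
    using assms by presburger
  then show ?thesis
    unfolding power_add[symmetric] by (simp only: minus_one_power_iff)
qed

lemma sorting_perm_Diff_singleton:
  assumes \<sigma>: "inj \<sigma>" and s: "finite s" "v \<in> s"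
    and \<tau>': "sorting_perm (sorted_labels \<sigma> (s - {v})) (card s - 1) \<tau>'"
  defines "k \<equiv> card s - 1" and "a \<equiv> card {w \<in> s. w < v}" and "b \<equiv> card {w \<in> s. \<sigma> w < \<sigma> v}"
  shows "sorting_perm (sorted_labels \<sigma> s) (card s) (shift_cycle k a \<circ> \<tau>' \<circ> inv (shift_cycle k b))"
proof -
  define xs where "xs = sorted_list_of_set s"
  have "card s > 0"
    using s card_gt_0_iff by blast
  then have card_s: "card s = Suc k"
    by (simp add: k_def)
  note del = nth_sorted_list_of_set_Diff_singleton[OF s, folded a_def xs_def, unfolded card_s diff_Suc_1]
  have "a \<le> k"
    using del(1) by simp
  have inj: "inj_on (sorted_labels \<sigma> s) {0..<Suc k}"
    using inj_on_sorted_labels[OF \<sigma> s(1)] by (simp add: card_s)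
  have \<tau>'_shifted: "sorting_perm (sorted_labels \<sigma> s \<circ> shift_cycle k a) k \<tau>'"
    using \<tau>' by (subst sorting_perm_cong[where h' = "sorted_labels \<sigma> (s - {v})"])
      (simp_all add: del(3) card_s flip: xs_def)
  have "card {i. i < Suc k \<and> sorted_labels \<sigma> s i < sorted_labels \<sigma> s a} = b"
  proof -
    have "s = (\<lambda>i. xs ! i) ` {0..<Suc k}"
      using s(1) card_s by (metis xs_def map_nth set_map set_upt set_sorted_list_of_set length_sorted_list_of_set)
    then have "{w \<in> s. \<sigma> w < \<sigma> v} = (\<lambda>i. xs ! i) ` {i. i < Suc k \<and> \<sigma> (xs ! i) < \<sigma> (xs ! a)}"
      using del(2) by auto
    moreover have "inj_on (\<lambda>i. xs ! i) {i. i < Suc k \<and> \<sigma> (xs ! i) < \<sigma> (xs ! a)}"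
      using s(1) card_s by (intro inj_on_nth) (simp_all add: xs_def)
    ultimately show ?thesis
      unfolding b_def xs_def by (simp add: card_image)
  qed
  then show ?thesis
    using sorting_perm_insert[OF inj \<open>a \<le> k\<close> \<tau>'_shifted] card_s by simp
qed

lemma sgnA_Diff_singleton:
  assumes \<sigma>: "inj \<sigma>" and s: "finite s" "v \<in> s"
  shows "sgnA s \<sigma> * sgnA (s - {v}) \<sigma> = (-1) ^ (card {w \<in> s. w < v} + card {w \<in> s. \<sigma> w < \<sigma> v})"
proof -
  define k where "k = card s - 1"
  define a where "a = card {w \<in> s. w < v}"
  define b where "b = card {w \<in> s. \<sigma> w < \<sigma> v}"
  have "card (s - {v}) = k"
    using s by (simp add: k_def)
  have "a \<le> k"
    using nth_sorted_list_of_set_Diff_singleton(1)[OF s] by (simp add: a_def k_def)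
  have "b \<le> card (s - {v})"
    unfolding b_def using s(1) by (intro card_mono) auto
  then have "b \<le> k"
    using \<open>card (s - {v}) = k\<close> by simp
  obtain \<tau>' where \<tau>': "sorting_perm (sorted_labels \<sigma> (s - {v})) k \<tau>'"
    using sorting_perm_exists[OF inj_on_sorted_labels[OF \<sigma>]] s(1) \<open>card (s - {v}) = k\<close>
    by force
  have "permutation (shift_cycle k a)" "permutation (shift_cycle k b)" "permutation \<tau>'"
    using shift_cycle_permutes[OF \<open>a \<le> k\<close>] shift_cycle_permutes[OF \<open>b \<le> k\<close>] \<tau>'
    by (auto intro: permutes_imp_permutation simp: sorting_perm_def)
  then have "sign (shift_cycle k a \<circ> \<tau>' \<circ> inv (shift_cycle k b))
      = (-1) ^ (k - a) * sign \<tau>' * (-1) ^ (k - b)"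
    by (simp add: sign_compose permutation_compose permutation_inverse sign_inverse
        sign_shift_cycle \<open>a \<le> k\<close> \<open>b \<le> k\<close>)
  moreover have "sorting_perm (sorted_labels \<sigma> s) (card s) (shift_cycle k a \<circ> \<tau>' \<circ> inv (shift_cycle k b))"
    using sorting_perm_Diff_singleton[OF \<sigma> s] \<tau>' by (simp add: k_def a_def b_def)
  ultimately have "sgnA s \<sigma> = (-1) ^ (k - a) * of_int (sign \<tau>') * (-1) ^ (k - b)"
    using sgnA_eq_sign[OF \<sigma> s(1)] by simp
  moreover have "sgnA (s - {v}) \<sigma> = of_int (sign \<tau>')"
    using sgnA_eq_sign[of \<sigma> "s - {v}" \<tau>'] \<sigma> s(1) \<tau>' \<open>card (s - {v}) = k\<close> by simp
  ultimately have "sgnA s \<sigma> * sgnA (s - {v}) \<sigma>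
      = (-1) ^ (k - a) * (-1) ^ (k - b) * of_int (sign \<tau>' * sign \<tau>')"
    by (simp only: of_int_mult mult_ac)
  then show ?thesis
    using minus_one_power_diff_mult[OF \<open>a \<le> k\<close> \<open>b \<le> k\<close>] by (simp add: a_def b_def)
qed

lemma bdry_coef_relabel:
  assumes "inj \<sigma>" "finite s"
  shows "bdry_coef \<sigma> t s = sgnA t \<sigma> * sgnA s \<sigma> * bdry_coef id t s"
proof (cases "t \<subseteq> s \<and> card (s - t) = 1")
  case True
  then obtain v where v: "s - t = {v}"
    by (meson card_1_singletonE)
  then have "v \<in> s" "t = s - {v}"
    using True by auto
  then have "sgnA t \<sigma> * sgnA s \<sigma> = (-1) ^ card {w \<in> s. w < v} * (-1) ^ card {w \<in> s. \<sigma> w < \<sigma> v}"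
    using sgnA_Diff_singleton[OF assms] by (simp add: power_add mult.commute)
  moreover have "sgnA t \<sigma> * sgnA t \<sigma> = 1" "sgnA s \<sigma> * sgnA s \<sigma> = 1"
    using sgnA_cases[of t \<sigma>] sgnA_cases[of s \<sigma>] by auto
  ultimately show ?thesis
    using True v unfolding bdry_coef_def by (simp add: algebra_simps)
next
  case False
  then show ?thesis
    unfolding bdry_coef_def by auto
qed

lemma sign_conj_sandwich:
  fixes \<epsilon> :: "'a \<Rightarrow> real" and C C' :: "'a \<Rightarrow> 'a \<Rightarrow> real" and F :: "'a \<Rightarrow> real \<Rightarrow> real"
  assumes \<epsilon>: "\<And>u. \<epsilon> u = 1 \<or> \<epsilon> u = -1"
    and C': "\<And>u v. u \<in> U \<Longrightarrow> v \<in> V \<Longrightarrow> C' u v = \<epsilon> u * \<epsilon> v * C u v"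
    and odd: "\<And>v r. v \<in> V \<Longrightarrow> F v (- r) = - F v r"
    and "u \<in> U"
  shows "\<epsilon> u * (\<Sum>v\<in>V. C u v * F v (\<Sum>u'\<in>U. C u' v * y u'))
    = (\<Sum>v\<in>V. C' u v * F v (\<Sum>u'\<in>U. C' u' v * (\<epsilon> u' * y u')))"
proof -
  have sq: "\<epsilon> x * \<epsilon> x = 1" for x
    using \<epsilon>[of x] by auto
  have "\<epsilon> u * (C u v * F v (\<Sum>u'\<in>U. C u' v * y u'))
      = C' u v * F v (\<Sum>u'\<in>U. C' u' v * (\<epsilon> u' * y u'))" if "v \<in> V" for v
  proof -
    have "C' u' v * (\<epsilon> u' * y u') = \<epsilon> v * (C u' v * y u')" if "u' \<in> U" for u'
      using C'[OF that \<open>v \<in> V\<close>] sq[of u'] by (simp add: algebra_simps)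
    then have inner: "(\<Sum>u'\<in>U. C' u' v * (\<epsilon> u' * y u')) = \<epsilon> v * (\<Sum>u'\<in>U. C u' v * y u')"
      unfolding sum_distrib_left by (rule sum.cong[OF refl])
    have odd_scale: "F v (\<epsilon> v * r) = \<epsilon> v * F v r" for r
      using \<epsilon>[of v] odd[OF that] by auto
    have "C' u v * F v (\<Sum>u'\<in>U. C' u' v * (\<epsilon> u' * y u'))
        = \<epsilon> u * (C u v * F v (\<Sum>u'\<in>U. C u' v * y u')) * (\<epsilon> v * \<epsilon> v)"
      unfolding inner odd_scale C'[OF \<open>u \<in> U\<close> that] by (simp only: mult_ac)
    then show ?thesis
      using sq[of v] by simp
  qed
  then show ?thesis
    unfolding sum_distrib_left by (rule sum.cong[OF refl])
qed

lemma finite_faces: "simplicial_complex n X \<Longrightarrow> s \<in> faces X e \<Longrightarrow> finite s"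
  by (rule finite_subset[of s "{1..n}"]) (simp_all add: simplicial_complex_def faces_def)

lemma Tmap_op_down:
  assumes \<sigma>: "inj \<sigma>" and fin: "\<forall>s\<in>faces X d. finite s"
    and odd: "\<forall>s\<in>faces X d. \<forall>r. Fc s (- r) = - Fc s r" and "t \<in> faces X (d - 1)"
  shows "Tmap \<sigma> (op_down X d id Fc y) t = op_down X d \<sigma> Fc (Tmap \<sigma> y) t"
proof -
  have rel: "bdry_coef \<sigma> u v = sgnA u \<sigma> * sgnA v \<sigma> * bdry_coef id u v"
    if "u \<in> faces X (d - 1)" "v \<in> faces X d" for u v
    using bdry_coef_relabel[OF \<sigma>] fin that(2) by blast
  have odd': "Fc v (- r) = - Fc v r" if "v \<in> faces X d" for v r
    using odd that by blast
  show ?thesis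
    unfolding Tmap_def op_down_def
    by (rule sign_conj_sandwich[where \<epsilon> = "\<lambda>s. sgnA s \<sigma>"
          and C = "bdry_coef id" and C' = "bdry_coef \<sigma>"
          and U = "faces X (d - 1)" and V = "faces X d" and F = Fc,
          OF sgnA_cases rel odd' \<open>t \<in> faces X (d - 1)\<close>])
qed

lemma Tmap_op_up:
  assumes \<sigma>: "inj \<sigma>" and fin: "\<forall>s\<in>faces X d. finite s"
    and odd: "\<forall>t\<in>faces X (d - 1). \<forall>r. Hc t (- r) = - Hc t r" and "s \<in> faces X d"
  shows "Tmap \<sigma> (op_up X d id Hc x) s = op_up X d \<sigma> Hc (Tmap \<sigma> x) s"
proof -
  have rel: "bdry_coef \<sigma> v u = sgnA u \<sigma> * sgnA v \<sigma> * bdry_coef id v u"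
    if "u \<in> faces X d" "v \<in> faces X (d - 1)" for u v
    using bdry_coef_relabel[OF \<sigma>, of u v] fin that(1) by (simp add: mult_ac)
  have odd': "Hc v (- r) = - Hc v r" if "v \<in> faces X (d - 1)" for v r
    using odd that by blast
  show ?thesis
    unfolding Tmap_def op_up_def
    by (rule sign_conj_sandwich[where \<epsilon> = "\<lambda>s. sgnA s \<sigma>"
          and C = "\<lambda>u v. bdry_coef id v u" and C' = "\<lambda>u v. bdry_coef \<sigma> v u"
          and U = "faces X d" and V = "faces X (d - 1)" and F = Hc,
          OF sgnA_cases rel odd' \<open>s \<in> faces X d\<close>])
qed

theorem mainTheorem2:
  fixes n d :: nat and X :: "nat set set" and \<sigma> :: "nat \<Rightarrow> nat"
    and Fc Hc :: "nat set \<Rightarrow> real \<Rightarrow> real"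
  assumes "simplicial_complex n X"
    and "\<sigma> permutes {1..n}"
    and "\<forall>s\<in>faces X d. \<forall>r. Fc s (- r) = - Fc s r"
    and "\<forall>t\<in>faces X (d - 1). \<forall>r. Hc t (- r) = - Hc t r"
  shows "(\<forall>y. \<forall>t\<in>faces X (d - 1).
            Tmap \<sigma> (op_down X d id Fc y) t = op_down X d \<sigma> Fc (Tmap \<sigma> y) t) \<and>
         (\<forall>x. \<forall>s\<in>faces X d.
            Tmap \<sigma> (op_up X d id Hc x) s = op_up X d \<sigma> Hc (Tmap \<sigma> x) s)"
proof -
  have \<sigma>: "inj \<sigma>"
    using assms(2) by (rule permutes_inj)
  have fin: "\<forall>s\<in>faces X d. finite s"
    using finite_faces[OF assms(1)] by blast
  show ?thesis
    using Tmap_op_down[OF \<sigma> fin assms(3)] Tmap_op_up[OF \<sigma> fin assms(4)] by blast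
qed

end
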